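(* Let $G=(V,E)$ be a finite simple undirected graph with $\{1,2\}\in E$; write $e_0=\{1,2\}$ and label the other edges $1,\dots,n$, $n=|E|-1$. Let $X\subseteq\mathbb R^n$ be the set of $(u_1,\dots,u_n)$ such that, setting $u_{e_0}:=0$, for every cycle $C$ of $G$ the minimum of $\{u_e:e\in C\}$ is attained at least twice. Let $w\in\mathbb R^n$ be tropically generic, i.e. its coordinates are linearly independent over $\mathbb Q$, and let $Y=\{w-u : u\in X\}$ (equivalently, the set of $u$ such that, with $w_{e_0}=u_{e_0}:=0$, for every cycle $C$ the minimum of $\{w_e-u_e: e\in C\}$ is attained at least twice). Then $X$ and $Y$ intersect transversally at each of their intersection points.
   Context: $X$ and $Y$ are regarded as rational polyhedral complexes (tropical varieties) in $\mathbb R^n$. Two such complexes $X,Y$ intersect transversally at a point $p\in X\cap Y$ if $p$ is contained in a face $\sigma$ of $X$ and a face $\tau$ of $Y$ such that the affine span of $\sigma\cup\tau$ is all of $\mathbb R^n$. *)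

theory Defs
  imports "HOL-Analysis.Analysis"
begin

definition simple_graph :: "'v set \<Rightarrow> 'v set set \<Rightarrow> bool" where
  "simple_graph V E \<longleftrightarrow> finite V \<and>
     (\<forall>e\<in>E. \<exists>a b. a \<noteq> b \<and> a \<in> V \<and> b \<in> V \<and> e = {a, b})"

definition is_cycle :: "'v set set \<Rightarrow> 'v set set \<Rightarrow> bool" where
  "is_cycle E C \<longleftrightarrow> (\<exists>vs. length vs \<ge> 3 \<and> distinct vs \<and>
     (\<forall>i<length vs. {vs ! i, vs ! ((i + 1) mod length vs)} \<in> E) \<and>
     C = {{vs ! i, vs ! ((i + 1) mod length vs)} | i. i < length vs})"

definition min_attained_twice :: "('e \<Rightarrow> real) \<Rightarrow> 'e set \<Rightarrow> bool" where
  "min_attained_twice f C \<longleftrightarrow>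
     (\<exists>e1\<in>C. \<exists>e2\<in>C. e1 \<noteq> e2 \<and> f e1 = Min (f ` C) \<and> f e2 = Min (f ` C))"

text \<open>Coordinates of u extended to all edges: u at edge e0 is 0, and edge lab i carries u $ i.\<close>
definition edge_val :: "('n \<Rightarrow> 'v set) \<Rightarrow> 'v set \<Rightarrow> real ^ 'n \<Rightarrow> 'v set \<Rightarrow> real" where
  "edge_val lab e0 u e = (if e = e0 then 0 else u $ (the_inv lab e))"

definition tropX :: "'v set set \<Rightarrow> 'v set \<Rightarrow> ('n \<Rightarrow> 'v set) \<Rightarrow> (real ^ 'n) set" where
  "tropX E e0 lab = {u. \<forall>C. is_cycle E C \<longrightarrow> min_attained_twice (edge_val lab e0 u) C}"

definition tropically_generic :: "real ^ 'n \<Rightarrow> bool" where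
  "tropically_generic w \<longleftrightarrow>
     (\<forall>q :: 'n \<Rightarrow> real. (\<forall>i. q i \<in> \<rat>) \<and> (\<Sum>i\<in>UNIV. q i * w $ i) = 0 \<longrightarrow> (\<forall>i. q i = 0))"

text \<open>Transversal intersection at p: p lies in a (polyhedral) face of X and one of Y whose union
  affinely spans the whole space.  Faces are rendered as polyhedra contained in the set.\<close>
definition transversal_at :: "('a::euclidean_space) set \<Rightarrow> 'a set \<Rightarrow> 'a \<Rightarrow> bool" where
  "transversal_at X Y p \<longleftrightarrow> (\<exists>\<sigma> \<tau>. polyhedron \<sigma> \<and> \<sigma> \<subseteq> X \<and> p \<in> \<sigma> \<and>
      polyhedron \<tau> \<and> \<tau> \<subseteq> Y \<and> p \<in> \<tau> \<and> affine hull (\<sigma> \<union> \<tau>) = UNIV)"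

end

(*
  At a common point p of X and w - X put q = w - p.  Let \<sigma> be the cone of all u whose
  edge values are ordered at least as p's are (u_e \<le> u_f whenever p_e \<le> p_f), and \<tau> = w - \<sigma>',
  where \<sigma>' is the analogous cone of q.  Such u attain their minimum on a cycle wherever p does,
  so \<sigma> \<subseteq> X and \<tau> \<subseteq> w - X.  Pushing p slightly along the indicator of a level set
  {i. p_i = c} with c \<noteq> 0 keeps it in \<sigma>, so these indicators, and those of q, lie in the span
  of \<sigma> \<union> \<tau>.  A nonzero y orthogonal to that span would have vanishing sums over all these
  level sets; applying a Q-linear functional \<psi> : R \<rightarrow> Q with \<psi>(y_i) = 1 for some i and
  grouping by level sets gives \<Sum> \<psi>(y_i) p_i = 0 = \<Sum> \<psi>(y_i) q_i, a nontrivial rational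
  relation among the coordinates of w = p + q.
*)

theory Submission
  imports Defs
begin

lemma polyhedron_linear_constraints:
  fixes a :: "'i \<Rightarrow> 'a::euclidean_space"
  assumes "finite I"
  shows "polyhedron {u. \<forall>i\<in>I. P i \<longrightarrow> a i \<bullet> u \<le> b i}"
proof -
  have "{u. \<forall>i\<in>I. P i \<longrightarrow> a i \<bullet> u \<le> b i} =
        \<Inter> ((\<lambda>i. if P i then {u. a i \<bullet> u \<le> b i} else UNIV) ` I)"
    by auto
  then show ?thesis
    using assms by (auto simp: polyhedron_halfspace_le)
qed

lemma polyhedron_translation:
  fixes a :: "'a::euclidean_space"
  assumes "polyhedron S"
  shows "polyhedron ((+) a ` S)"
  using assms
  by (simp add: polyhedron_eq_finite_faces faces_of_translation inj_image_eq_iff inj_on_def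
      closed_translation convex_translation)

lemma polyhedron_point_reflection:
  fixes w :: "'a::euclidean_space"
  assumes "polyhedron S"
  shows "polyhedron ((\<lambda>u. w - u) ` S)"
proof -
  have "(\<lambda>u. w - u) ` S = (+) w ` uminus ` S"
    by (auto simp: image_image)
  then show ?thesis
    using assms by (simp add: polyhedron_translation polyhedron_negations)
qed

lemma direction_in_span:
  assumes "x \<in> S" "x + c *\<^sub>R d \<in> S" "c \<noteq> 0"
  shows "d \<in> span S"
proof -
  have "(1 / c) *\<^sub>R ((x + c *\<^sub>R d) - x) \<in> span S"
    using assms by (intro span_mul span_diff span_base)
  then show ?thesis
    using assms(3) by simp
qed

lemma span_eq_UNIV_if_orthogonal_eq_0:
  fixes S :: "'a::euclidean_space set"
  assumes "\<And>y. (\<And>x. x \<in> span S \<Longrightarrow> y \<bullet> x = 0) \<Longrightarrow> y = 0"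
  shows "span S = UNIV"
proof (rule ccontr)
  assume "span S \<noteq> UNIV"
  then have "dim S < DIM('a)"
    using dim_eq_full[of S] dim_subset_UNIV[of S] by linarith
  then obtain y where "y \<noteq> 0" "\<And>x. x \<in> span S \<Longrightarrow> orthogonal y x"
    by (metis orthogonal_to_subspace_exists)
  with assms show False
    by (auto simp: orthogonal_def)
qed

lemma min_attained_twice_order_preserving:
  assumes "finite C" "min_attained_twice g C"
    and preserves: "\<And>e f. e \<in> C \<Longrightarrow> f \<in> C \<Longrightarrow> g e \<le> g f \<Longrightarrow> h e \<le> h f"
  shows "min_attained_twice h C"
proof -
  have "h e = Min (h ` C)" if "e \<in> C" "g e = Min (g ` C)" for e
  proof (rule Min_eqI[symmetric])
    fix y assume "y \<in> h ` C"
    then obtain f where "f \<in> C" "y = h f" by blast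
    moreover have "g e \<le> g f"
      using \<open>f \<in> C\<close> that assms(1) by simp
    ultimately show "h e \<le> y"
      using preserves that by blast
  qed (use assms that in auto)
  then show ?thesis
    using assms(2) unfolding min_attained_twice_def by blast
qed

definition order_cone :: "('e \<Rightarrow> 'a::real_inner) \<Rightarrow> 'e set \<Rightarrow> 'a \<Rightarrow> 'a set" where
  "order_cone a E p = {u. \<forall>e\<in>E. \<forall>f\<in>E. a e \<bullet> p \<le> a f \<bullet> p \<longrightarrow> a e \<bullet> u \<le> a f \<bullet> u}"

lemma polyhedron_order_cone:
  fixes a :: "'e \<Rightarrow> 'a::euclidean_space"
  assumes "finite E"
  shows "polyhedron (order_cone a E p)"
proof -
  have "order_cone a E p =
      {u. \<forall>(e, f)\<in>E \<times> E. a e \<bullet> p \<le> a f \<bullet> p \<longrightarrow> (a e - a f) \<bullet> u \<le> 0}"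
    by (auto simp: order_cone_def inner_diff_left)
  then show ?thesis
    using polyhedron_linear_constraints[of "E \<times> E" "\<lambda>(e, f). a e \<bullet> p \<le> a f \<bullet> p"
        "\<lambda>(e, f). a e - a f" "\<lambda>_. 0"] assms
    by (simp add: case_prod_beta)
qed

lemma self_in_order_cone: "p \<in> order_cone a E p"
  by (simp add: order_cone_def)

lemma zero_in_order_cone: "0 \<in> order_cone a E p"
  by (simp add: order_cone_def)

lemma order_cone_perturbation:
  fixes a :: "'e \<Rightarrow> 'a::real_inner"
  assumes "finite E"
    and ties: "\<And>e f. e \<in> E \<Longrightarrow> f \<in> E \<Longrightarrow> a e \<bullet> p = a f \<bullet> p \<Longrightarrow> a e \<bullet> d \<le> a f \<bullet> d"
  obtains \<epsilon> where "\<epsilon> > 0" "p + \<epsilon> *\<^sub>R d \<in> order_cone a E p"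
proof -
  have "\<forall>\<^sub>F \<epsilon> in at_right 0. a e \<bullet> p \<le> a f \<bullet> p \<longrightarrow> a e \<bullet> (p + \<epsilon> *\<^sub>R d) \<le> a f \<bullet> (p + \<epsilon> *\<^sub>R d)"
    if "e \<in> E" "f \<in> E" for e f
  proof (cases "a e \<bullet> p = a f \<bullet> p")
    case True
    show ?thesis
      using eventually_at_right_less[of 0]
    proof eventually_elim
      case (elim \<epsilon>)
      then show ?case
        using ties[OF that True] True by (simp add: inner_add_right mult_left_mono)
    qed
  next
    case False
    have lim: "((\<lambda>\<epsilon>. a e \<bullet> (p + \<epsilon> *\<^sub>R d) - a f \<bullet> (p + \<epsilon> *\<^sub>R d)) \<longlongrightarrow> a e \<bullet> p - a f \<bullet> p) (at_right 0)"
      by (auto intro!: tendsto_eq_intros)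
    have "\<forall>\<^sub>F \<epsilon> in at_right 0. a e \<bullet> (p + \<epsilon> *\<^sub>R d) - a f \<bullet> (p + \<epsilon> *\<^sub>R d) < 0"
      if "a e \<bullet> p < a f \<bullet> p"
      by (rule order_tendstoD(2)[OF lim]) (use that in simp)
    then show ?thesis
      using False by (cases "a e \<bullet> p < a f \<bullet> p") (auto elim: eventually_mono)
  qed
  then have "\<forall>\<^sub>F \<epsilon> in at_right 0. \<epsilon> > 0 \<and> p + \<epsilon> *\<^sub>R d \<in> order_cone a E p"
    using assms(1) eventually_at_right_less[of 0]
    by (auto simp: order_cone_def eventually_ball_finite_distrib eventually_conj_iff)
  then show ?thesis
    using that eventually_happens[of _ "at_right (0::real)"] by auto
qed

definition edge_coord :: "('n::finite \<Rightarrow> 'v set) \<Rightarrow> 'v set \<Rightarrow> 'v set \<Rightarrow> real ^ 'n" where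
  "edge_coord lab e0 e = (if e = e0 then 0 else axis (the_inv lab e) 1)"

lemma edge_val_eq_inner: "edge_val lab e0 u e = edge_coord lab e0 e \<bullet> u"
  by (simp add: edge_val_def edge_coord_def inner_axis inner_commute)

lemma order_cone_subset_tropX:
  assumes "finite E" "p \<in> tropX E e0 lab"
  shows "order_cone (edge_coord lab e0) E p \<subseteq> tropX E e0 lab"
proof
  fix u assume u: "u \<in> order_cone (edge_coord lab e0) E p"
  have "min_attained_twice (edge_val lab e0 u) C" if "is_cycle E C" for C
  proof (rule min_attained_twice_order_preserving)
    have "C \<subseteq> E"
      using that by (auto simp: is_cycle_def)
    then show "finite C"
      using assms(1) by (rule finite_subset)
    show "min_attained_twice (edge_val lab e0 p) C"
      using assms(2) that by (simp add: tropX_def)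
    show "edge_val lab e0 u e \<le> edge_val lab e0 u f"
      if "e \<in> C" "f \<in> C" "edge_val lab e0 p e \<le> edge_val lab e0 p f" for e f
      using u that \<open>C \<subseteq> E\<close> by (auto simp: order_cone_def edge_val_eq_inner)
  qed
  then show "u \<in> tropX E e0 lab"
    by (simp add: tropX_def)
qed

definition level_indicator :: "real ^ 'n \<Rightarrow> real \<Rightarrow> real ^ 'n" where
  "level_indicator x c = (\<chi> i. if x $ i = c then 1 else 0)"

lemma inner_level_indicator: "y \<bullet> level_indicator x c = (\<Sum>i | x $ i = c. y $ i)"
  by (simp add: inner_vec_def level_indicator_def if_distrib sum.inter_filter[symmetric] cong: if_cong)

lemma edge_coord_inner_level_indicator:
  assumes "c \<noteq> 0"
  shows "edge_coord lab e0 e \<bullet> level_indicator p c = (if edge_val lab e0 p e = c then 1 else 0)"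
  using assms by (simp add: edge_val_eq_inner[symmetric] edge_val_def level_indicator_def)

lemma level_indicator_perturbation:
  assumes "finite E" "c \<noteq> 0"
  obtains \<epsilon> where "\<epsilon> > 0" "p + \<epsilon> *\<^sub>R level_indicator p c \<in> order_cone (edge_coord lab e0) E p"
  using order_cone_perturbation[OF assms(1)]
  by (metis edge_coord_inner_level_indicator[OF assms(2)] edge_val_eq_inner order_refl)

lemma additive_rational_functional_exists:
  fixes t :: real
  assumes "t \<noteq> 0"
  obtains \<psi> :: "real \<Rightarrow> real" where "Modules.additive \<psi>" "\<And>x. \<psi> x \<in> \<rat>" "\<psi> t = 1"
proof -
  interpret Q: vector_space_pair "\<lambda>(r::rat) (x::real). of_rat r * x" "\<lambda>(r::rat) (x::rat). r * x"
    by unfold_locales (auto simp: algebra_simps of_rat_add of_rat_mult)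
  have indep: "Q.vs1.independent {t}"
    using assms by (simp add: Q.vs1.independent_insert)
  define \<phi> where "\<phi> = Q.construct {t} (\<lambda>_. 1)"
  have "\<phi> (x + y) = \<phi> x + \<phi> y" for x y
    using Q.linear_construct[OF indep] by (simp add: \<phi>_def Vector_Spaces.linear_iff)
  moreover have "\<phi> t = 1"
    unfolding \<phi>_def by (rule Q.construct_basis[OF indep]) simp
  ultimately show ?thesis
    by (intro that[of "of_rat \<circ> \<phi>"]) (auto simp: Modules.additive_def of_rat_add)
qed

lemma additive_weighted_sum_eq_0:
  fixes x y :: "real ^ 'n::finite"
  assumes "Modules.additive \<psi>"
    and level: "\<And>c. c \<noteq> 0 \<Longrightarrow> y \<bullet> level_indicator x c = 0"
  shows "(\<Sum>i\<in>UNIV. \<psi> (y $ i) * x $ i) = 0"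
proof -
  have "(\<Sum>i | x $ i = c. \<psi> (y $ i) * x $ i) = 0" for c
  proof -
    have "(\<Sum>i | x $ i = c. \<psi> (y $ i) * x $ i) = c * \<psi> (\<Sum>i | x $ i = c. y $ i)"
      by (simp add: additive.sum[OF assms(1)] sum_distrib_left mult.commute)
    also have "\<dots> = 0"
      using level[of c] additive.zero[OF assms(1)]
      by (cases "c = 0") (simp_all add: inner_level_indicator)
    finally show ?thesis .
  qed
  then show ?thesis
    by (subst sum.image_gen[of UNIV _ "\<lambda>i. x $ i"]) simp_all
qed

lemma generic_sum_orthogonal_level_indicators_eq_0:
  fixes p q y :: "real ^ 'n::finite"
  assumes "tropically_generic (p + q)"
    and "\<And>c. c \<noteq> 0 \<Longrightarrow> y \<bullet> level_indicator p c = 0"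
    and "\<And>c. c \<noteq> 0 \<Longrightarrow> y \<bullet> level_indicator q c = 0"
  shows "y = 0"
proof (rule ccontr)
  assume "y \<noteq> 0"
  then obtain i0 where "y $ i0 \<noteq> 0"
    by (metis vec_eq_iff zero_index)
  then obtain \<psi> :: "real \<Rightarrow> real"
    where \<psi>: "Modules.additive \<psi>" "\<And>x. \<psi> x \<in> \<rat>" "\<psi> (y $ i0) = 1"
    using additive_rational_functional_exists by blast
  have "(\<Sum>i\<in>UNIV. \<psi> (y $ i) * (p + q) $ i) =
      (\<Sum>i\<in>UNIV. \<psi> (y $ i) * p $ i) + (\<Sum>i\<in>UNIV. \<psi> (y $ i) * q $ i)"
    by (simp add: distrib_left sum.distrib)
  also have "\<dots> = 0"
    using assms(2,3) by (simp add: additive_weighted_sum_eq_0[OF \<psi>(1)])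
  finally have "\<forall>i. \<psi> (y $ i) = 0"
    using assms(1) \<psi>(2) unfolding tropically_generic_def
    by (elim allE[of _ "\<lambda>i. \<psi> (y $ i)"]) blast
  with \<psi>(3) show False
    by simp
qed

lemma span_order_cones_eq_UNIV:
  fixes w p :: "real ^ 'n::finite" and lab :: "'n \<Rightarrow> 'v set" and e0 :: "'v set"
  assumes "finite E" "tropically_generic w"
  defines "\<sigma> \<equiv> order_cone (edge_coord lab e0) E p"
    and "\<tau> \<equiv> (\<lambda>u. w - u) ` order_cone (edge_coord lab e0) E (w - p)"
  shows "span (\<sigma> \<union> \<tau>) = UNIV"
proof (rule span_eq_UNIV_if_orthogonal_eq_0)
  fix y assume y: "\<And>x. x \<in> span (\<sigma> \<union> \<tau>) \<Longrightarrow> y \<bullet> x = 0"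
  have "y \<bullet> level_indicator p c = 0" if "c \<noteq> 0" for c
  proof -
    obtain \<epsilon> where "\<epsilon> > 0" "p + \<epsilon> *\<^sub>R level_indicator p c \<in> \<sigma>"
      unfolding \<sigma>_def using level_indicator_perturbation[OF \<open>finite E\<close> \<open>c \<noteq> 0\<close>] .
    then have "level_indicator p c \<in> span \<sigma>"
      by (intro direction_in_span[of p]) (auto simp: \<sigma>_def self_in_order_cone)
    then show ?thesis
      using y span_mono[of \<sigma> "\<sigma> \<union> \<tau>"] by blast
  qed
  moreover have "y \<bullet> level_indicator (w - p) c = 0" if "c \<noteq> 0" for c
  proof -
    obtain \<epsilon> where "\<epsilon> > 0"
      "(w - p) + \<epsilon> *\<^sub>R level_indicator (w - p) c \<in> order_cone (edge_coord lab e0) E (w - p)"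
      using level_indicator_perturbation[OF \<open>finite E\<close> \<open>c \<noteq> 0\<close>] .
    then have "p + (- \<epsilon>) *\<^sub>R level_indicator (w - p) c \<in> \<tau>"
      unfolding \<tau>_def
      by (auto intro: image_eqI[where x = "(w - p) + \<epsilon> *\<^sub>R level_indicator (w - p) c"])
    moreover have "p \<in> \<tau>"
      unfolding \<tau>_def by (auto intro: image_eqI[where x = "w - p"] self_in_order_cone)
    ultimately have "level_indicator (w - p) c \<in> span \<tau>"
      using \<open>\<epsilon> > 0\<close> by (intro direction_in_span[of p \<tau> "- \<epsilon>"]) auto
    then show ?thesis
      using y span_mono[of \<tau> "\<sigma> \<union> \<tau>"] by blast
  qed
  ultimately show "y = 0"
    using assms(2) by (intro generic_sum_orthogonal_level_indicators_eq_0[of p "w - p"]) auto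
qed

theorem lemma2p2:
  fixes V :: "nat set" and E :: "nat set set"
    and lab :: "'n::finite \<Rightarrow> nat set" and w :: "real ^ 'n"
  assumes "simple_graph V E"
    and "{1, 2} \<in> E"
    and "bij_betw lab UNIV (E - {{1, 2}})"
    and "tropically_generic w"
  shows "\<forall>p \<in> tropX E {1, 2} lab \<inter> (\<lambda>u. w - u) ` tropX E {1, 2} lab.
           transversal_at (tropX E {1, 2} lab) ((\<lambda>u. w - u) ` tropX E {1, 2} lab) p"
proof
  let ?X = "tropX E {1, 2} lab" and ?cone = "order_cone (edge_coord lab {1, 2}) E"
  fix p assume "p \<in> ?X \<inter> (\<lambda>u. w - u) ` ?X"
  then have pX: "p \<in> ?X" and qX: "w - p \<in> ?X"
    by auto
  have "E \<subseteq> insert {1, 2} (range lab)"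
    using assms(3) by (auto simp: bij_betw_def)
  then have "finite E"
    by (rule finite_subset) simp
  define \<sigma> \<tau> where "\<sigma> = ?cone p" and "\<tau> = (\<lambda>u. w - u) ` ?cone (w - p)"
  have "polyhedron \<sigma>" "\<sigma> \<subseteq> ?X" "p \<in> \<sigma>"
    unfolding \<sigma>_def using \<open>finite E\<close> pX
    by (auto simp: polyhedron_order_cone order_cone_subset_tropX self_in_order_cone)
  moreover have "polyhedron \<tau>" "\<tau> \<subseteq> (\<lambda>u. w - u) ` ?X" "p \<in> \<tau>"
    unfolding \<tau>_def using \<open>finite E\<close> order_cone_subset_tropX[OF \<open>finite E\<close> qX]
    by (auto simp: polyhedron_point_reflection polyhedron_order_cone
        intro: image_eqI[where x = "w - p"] self_in_order_cone)
  moreover have "affine hull (\<sigma> \<union> \<tau>) = UNIV"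
    using span_order_cones_eq_UNIV[OF \<open>finite E\<close> assms(4)]
    by (simp add: affine_hull_span_0 hull_inc \<sigma>_def \<tau>_def zero_in_order_cone)
  ultimately show "transversal_at ?X ((\<lambda>u. w - u) ` ?X) p"
    unfolding transversal_at_def by blast
qed

end
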